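(* Assume each $f_i$ has degree $d_i\ge1$. Suppose $\lambda>0$ and $v=(v_1,\ldots,v_n,v_{n+1})\in K_1^\circ$ satisfy $\lambda v_{n+1}=-1$ (i.e., $\Delta\tilde y=\lambda[v]_1$ satisfies $\langle x_{n+1},\Delta\tilde y\rangle=-1$ and $\Delta\tilde y\in\mathscr R_1(K_1^\circ)$). If the point $(0,v)$ lies in the closure of $\widetilde K_1\cap\{x_0>0\}$, then the problem $\min x_{n+1}$ over $K_1$ and the problem $\min_{x\in K}\max_i f_i(x)$ are both unbounded below, and hence there are no weakly Pareto points.
   Context: $f_1,\ldots,f_m,c_i$ ($i\in\mathcal E\cup\mathcal I$) are real polynomials in $x\in\mathbb R^n$, $K=\{x: c_i(x)=0\ (i\in\mathcal E),\ c_j(x)\ge0\ (j\in\mathcal I)\}$, $d_i=\deg f_i$. For a polynomial $p$ of degree $e$ in $x$, $\tilde p(x_0,x)=x_0^ep(x/x_0)$ and $p^{hom}(x)=\tilde p(0,x)$; $\tilde x=(x_0,x)$. Define $K_1=\{(x,x_{n+1})\in\mathbb R^{n+1}: -(-x_{n+1})^{d_i}-f_i(x)\ge0\ (i\in[m]),\ x\in K\}$, $\widetilde K_1=\{(x_0,x,x_{n+1}): -(-x_{n+1})^{d_i}-\tilde f_i(\tilde x)\ge0\ (i\in[m]),\ \tilde c_i(\tilde x)=0\ (i\in\mathcal E),\ \tilde c_j(\tilde x)\ge0\ (j\in\mathcal I),\ \|\tilde x\|^2+x_{n+1}^2=1,\ x_0\ge0\}$, and $K_1^\circ=\{(x,x_{n+1}):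 -(-x_{n+1})^{d_i}-f_i^{hom}(x)\ge0\ (i\in[m]),\ c_i^{hom}(x)=0\ (i\in\mathcal E),\ c_j^{hom}(x)\ge0\ (j\in\mathcal I),\ \|x\|^2+x_{n+1}^2=1\}$. $[v]_1=(1,v)$, $\mathscr R_1(T)$ is the set of degree-1 moment vectors of Borel measures supported in $T$. A point $x^*\in K$ is weakly Pareto if no $x\in K$ has $f_i(x)<f_i(x^* )$ for all $i$. *)

theory Defs
  imports "HOL-Analysis.Analysis" "HOL-Library.Poly_Mapping"
begin

text \<open>A polynomial is a finitely supported map from
  monomials (exponent vectors 'n => nat) to real coefficients.\<close>

type_synonym 'n rpoly = "('n \<Rightarrow> nat) \<Rightarrow>\<^sub>0 real"

definition mon_deg :: "('n::finite \<Rightarrow> nat) \<Rightarrow> nat" where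
  "mon_deg a = (\<Sum>i\<in>UNIV. a i)"

definition mon_eval :: "('n::finite \<Rightarrow> nat) \<Rightarrow> real^'n \<Rightarrow> real" where
  "mon_eval a x = (\<Prod>i\<in>UNIV. (x $ i) ^ a i)"

definition peval :: "'n::finite rpoly \<Rightarrow> real^'n \<Rightarrow> real" where
  "peval p x = (\<Sum>a\<in>Poly_Mapping.keys p. Poly_Mapping.lookup p a * mon_eval a x)"

text \<open>total degree (0 for the zero polynomial)\<close>
definition pdeg :: "'n::finite rpoly \<Rightarrow> nat" where
  "pdeg p = Max (insert 0 (mon_deg ` Poly_Mapping.keys p))"

text \<open>homogenization: tilde p (x0,x) = x0^e p(x/x0), e = deg p\<close>
definition phomog :: "'n::finite rpoly \<Rightarrow> real \<Rightarrow> real^'n \<Rightarrow> real" where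
  "phomog p x0 x = (\<Sum>a\<in>Poly_Mapping.keys p. Poly_Mapping.lookup p a * x0 ^ (pdeg p - mon_deg a) * mon_eval a x)"

text \<open>highest-degree part: p^hom(x) = tilde p (0,x)\<close>
definition phom :: "'n::finite rpoly \<Rightarrow> real^'n \<Rightarrow> real" where
  "phom p x = phomog p 0 x"

definition feasK :: "('c \<Rightarrow> 'n::finite rpoly) \<Rightarrow> 'c set \<Rightarrow> 'c set \<Rightarrow> (real^'n) set" where
  "feasK c E I = {x. (\<forall>i\<in>E. peval (c i) x = 0) \<and> (\<forall>j\<in>I. peval (c j) x \<ge> 0)}"

definition K1 :: "(nat \<Rightarrow> 'n::finite rpoly) \<Rightarrow> nat \<Rightarrow> ('c \<Rightarrow> 'n rpoly) \<Rightarrow> 'c set \<Rightarrow> 'c set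
    \<Rightarrow> ((real^'n) \<times> real) set" where
  "K1 f m c E I = {(x, t). (\<forall>i<m. - ((- t) ^ pdeg (f i)) - peval (f i) x \<ge> 0) \<and> x \<in> feasK c E I}"

definition K1_tilde :: "(nat \<Rightarrow> 'n::finite rpoly) \<Rightarrow> nat \<Rightarrow> ('c \<Rightarrow> 'n rpoly) \<Rightarrow> 'c set \<Rightarrow> 'c set
    \<Rightarrow> (real \<times> (real^'n) \<times> real) set" where
  "K1_tilde f m c E I = {(x0, x, t).
      (\<forall>i<m. - ((- t) ^ pdeg (f i)) - phomog (f i) x0 x \<ge> 0) \<and>
      (\<forall>i\<in>E. phomog (c i) x0 x = 0) \<and> (\<forall>j\<in>I. phomog (c j) x0 x \<ge> 0) \<and>
      x0\<^sup>2 + (norm x)\<^sup>2 + t\<^sup>2 = 1 \<and> x0 \<ge> 0}"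

definition K1_circ :: "(nat \<Rightarrow> 'n::finite rpoly) \<Rightarrow> nat \<Rightarrow> ('c \<Rightarrow> 'n rpoly) \<Rightarrow> 'c set \<Rightarrow> 'c set
    \<Rightarrow> ((real^'n) \<times> real) set" where
  "K1_circ f m c E I = {(x, t).
      (\<forall>i<m. - ((- t) ^ pdeg (f i)) - phom (f i) x \<ge> 0) \<and>
      (\<forall>i\<in>E. phom (c i) x = 0) \<and> (\<forall>j\<in>I. phom (c j) x \<ge> 0) \<and>
      (norm x)\<^sup>2 + t\<^sup>2 = 1}"

definition weakly_pareto :: "(nat \<Rightarrow> 'n::finite rpoly) \<Rightarrow> nat \<Rightarrow> (real^'n) set \<Rightarrow> real^'n \<Rightarrow> bool" where
  "weakly_pareto f m K xs \<longleftrightarrow> xs \<in> K \<and> \<not> (\<exists>x\<in>K. \<forall>i<m. peval (f i) x < peval (f i) xs)"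

end

theory Submission
  imports Defs
begin

text \<open>A point \<open>(x\<^sub>0, x, t)\<close> of \<open>\<widetilde>K\<^sub>1\<close> with \<open>x\<^sub>0 > 0\<close> dehomogenizes to the point
  \<open>(x/x\<^sub>0, t/x\<^sub>0)\<close> of \<open>K\<^sub>1\<close>.  Approximating \<open>(0, v)\<close>, whose last coordinate is
  \<open>-1/\<lambda> < 0\<close>, by such points sends \<open>t/x\<^sub>0\<close> to \<open>-\<infinity>\<close>.  On \<open>K\<^sub>1\<close> one has
  \<open>f\<^sub>i(x) \<le> -(-t)\<^bsup>d\<^sub>i\<^esup> \<le> t\<close> once \<open>t \<le> -1\<close>, so \<open>max\<^sub>i f\<^sub>i\<close> is unbounded below on \<open>K\<close>,
  and then every point of \<open>K\<close> is strictly improved in all objectives.\<close>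

lemma mon_eval_scaleR: "mon_eval a (r *\<^sub>R x) = r ^ mon_deg a * mon_eval a x"
  unfolding mon_eval_def mon_deg_def
  by (simp add: power_mult_distrib prod.distrib power_sum)

lemma mon_deg_le_pdeg: "a \<in> Poly_Mapping.keys p \<Longrightarrow> mon_deg a \<le> pdeg p"
  unfolding pdeg_def by (intro Max_ge) auto

lemma phomog_eq_dehomog:
  assumes "x0 > 0"
  shows "phomog p x0 x = x0 ^ pdeg p * peval p (x /\<^sub>R x0)"
proof -
  have "Poly_Mapping.lookup p a * x0 ^ (pdeg p - mon_deg a) * mon_eval a x =
        x0 ^ pdeg p * (Poly_Mapping.lookup p a * mon_eval a (x /\<^sub>R x0))"
    if "a \<in> Poly_Mapping.keys p" for a
  proof -
    have "x0 ^ pdeg p = x0 ^ (pdeg p - mon_deg a) * x0 ^ mon_deg a"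
      using mon_deg_le_pdeg[OF that] by (simp flip: power_add)
    then have "x0 ^ (pdeg p - mon_deg a) = x0 ^ pdeg p * inverse x0 ^ mon_deg a"
      using assms by (simp add: power_inverse field_simps)
    then show ?thesis
      by (simp add: mon_eval_scaleR)
  qed
  then show ?thesis
    unfolding phomog_def peval_def sum_distrib_left by (rule sum.cong[OF refl])
qed

lemma K1_tilde_dehomog:
  assumes "(x0, x, t) \<in> K1_tilde f m c E I" and "x0 > 0"
  shows "(x /\<^sub>R x0, t / x0) \<in> K1 f m c E I"
proof -
  have scaled_nonneg_iff: "0 \<le> x0 ^ d * a \<longleftrightarrow> 0 \<le> a" for d a
    using mult_le_cancel_left_pos[of "x0 ^ d" 0 a] \<open>x0 > 0\<close> by simp
  have "- ((- (t / x0)) ^ pdeg (f i)) - peval (f i) (x /\<^sub>R x0) \<ge> 0" if "i < m" for i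
  proof -
    have "- t = x0 * (- (t / x0))"
      using \<open>x0 > 0\<close> by simp
    then have "(- t) ^ pdeg (f i) = x0 ^ pdeg (f i) * (- (t / x0)) ^ pdeg (f i)"
      by (simp only: power_mult_distrib)
    moreover have "- ((- t) ^ pdeg (f i)) - phomog (f i) x0 x \<ge> 0"
      using assms(1) that unfolding K1_tilde_def by auto
    ultimately have "x0 ^ pdeg (f i) *
        (- ((- (t / x0)) ^ pdeg (f i)) - peval (f i) (x /\<^sub>R x0)) \<ge> 0"
      by (simp add: phomog_eq_dehomog[OF \<open>x0 > 0\<close>] algebra_simps)
    then show ?thesis
      by (simp only: scaled_nonneg_iff)
  qed
  moreover have "x /\<^sub>R x0 \<in> feasK c E I"
    using assms
    by (auto simp: K1_tilde_def feasK_def phomog_eq_dehomog[OF \<open>x0 > 0\<close>] scaled_nonneg_iff)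
  ultimately show ?thesis
    unfolding K1_def by simp
qed

lemma K1_unbounded_below:
  assumes "(0, x, t) \<in> closure (K1_tilde f m c E I \<inter> {(x0, x, t). x0 > 0})" and "t < 0"
  shows "\<exists>(y, s)\<in>K1 f m c E I. s < M"
proof -
  obtain z where z_in: "\<And>k. z k \<in> K1_tilde f m c E I \<inter> {(x0, x, t). x0 > 0}"
    and z_lim: "z \<longlonglongrightarrow> (0, x, t)"
    using assms(1) unfolding closure_sequential by blast
  define x0 where "x0 k = fst (z k)" for k
  define tk where "tk k = snd (snd (z k))" for k
  have x0_pos: "x0 k > 0" for k
    using z_in[of k] by (auto simp: x0_def split: prod.splits)
  have "x0 \<longlonglongrightarrow> 0"
    unfolding x0_def using tendsto_fst[OF z_lim] by simp
  then have "filterlim x0 (at_right 0) sequentially"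
    using x0_pos by (intro tendsto_imp_filterlim_at_right) auto
  then have "filterlim (\<lambda>k. inverse (x0 k)) at_top sequentially"
    by (rule filterlim_compose[OF filterlim_inverse_at_top_right])
  moreover have "tk \<longlonglongrightarrow> t"
    unfolding tk_def using tendsto_snd[OF tendsto_snd[OF z_lim]] by simp
  ultimately have "filterlim (\<lambda>k. tk k * inverse (x0 k)) at_bot sequentially"
    using \<open>t < 0\<close> by (intro filterlim_tendsto_neg_mult_at_bot)
  then obtain k where "tk k / x0 k < M"
    unfolding filterlim_at_bot_dense by (auto simp: eventually_sequentially field_simps)
  moreover have "(inverse (x0 k) *\<^sub>R fst (snd (z k)), tk k / x0 k) \<in> K1 f m c E I"
    using z_in[of k] x0_pos[of k] unfolding x0_def tk_def
    by (intro K1_tilde_dehomog) (auto split: prod.splits)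
  ultimately show ?thesis by blast
qed

lemma K1_objective_le:
  assumes "(y, s) \<in> K1 f m c E I" and "s \<le> -1" and "i < m" and "pdeg (f i) \<ge> 1"
  shows "peval (f i) y \<le> s"
proof -
  have "peval (f i) y \<le> - ((- s) ^ pdeg (f i))"
    using assms(1,3) unfolding K1_def by auto
  moreover have "(- s) ^ 1 \<le> (- s) ^ pdeg (f i)"
    using assms(2,4) by (intro power_increasing) auto
  ultimately show ?thesis by simp
qed

lemma max_objective_unbounded_below:
  assumes "m \<ge> 1" and "\<forall>i<m. pdeg (f i) \<ge> 1"
    and "\<forall>M. \<exists>(y, s)\<in>K1 f m c E I. s < M"
  shows "\<exists>x\<in>feasK c E I. (MAX i\<in>{..<m}. peval (f i) x) < M"
proof -
  obtain y s where ys: "(y, s) \<in> K1 f m c E I" and "s < min M (-1)"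
    using assms(3) by blast
  then have "peval (f i) y < M" if "i < m" for i
    using K1_objective_le[OF ys, of i] assms(2) that by fastforce
  moreover have "y \<in> feasK c E I"
    using ys unfolding K1_def by simp
  moreover have "{..<m} \<noteq> {}"
    using \<open>m \<ge> 1\<close> by (auto simp: lessThan_empty_iff)
  ultimately show ?thesis
    by (intro bexI[of _ y]) (auto simp: Max_less_iff)
qed

lemma not_weakly_pareto_if_max_unbounded:
  assumes "m \<ge> 1" and "\<forall>M. \<exists>x\<in>K. (MAX i\<in>{..<m}. peval (f i) x) < M"
  shows "\<not> weakly_pareto f m K xs"
proof
  assume pareto: "weakly_pareto f m K xs"
  obtain x where "x \<in> K" and
    x_lt: "(MAX i\<in>{..<m}. peval (f i) x) < (MIN i\<in>{..<m}. peval (f i) xs)"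
    using assms(2) by blast
  moreover have "peval (f i) x < peval (f i) xs" if "i < m" for i
  proof -
    have "peval (f i) x \<le> (MAX i\<in>{..<m}. peval (f i) x)"
      using that by (intro Max_ge) auto
    moreover have "(MIN i\<in>{..<m}. peval (f i) xs) \<le> peval (f i) xs"
      using that by (intro Min_le) auto
    ultimately show ?thesis
      using x_lt by linarith
  qed
  ultimately show False
    using pareto unfolding weakly_pareto_def by blast
qed

theorem theorem7p3:
  fixes f :: "nat \<Rightarrow> 'n::finite rpoly" and m :: nat
    and c :: "'c \<Rightarrow> 'n rpoly" and E I :: "'c set"
    and lam :: real and v :: "(real^'n) \<times> real"
  assumes "m \<ge> 1" and "finite E" and "finite I"
    and "\<forall>i<m. pdeg (f i) \<ge> 1"
    and "lam > 0" and "v \<in> K1_circ f m c E I" and "lam * snd v = -1"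
    and "(0, fst v, snd v) \<in> closure (K1_tilde f m c E I \<inter> {(x0, x, t). x0 > 0})"
  shows "(\<forall>M::real. \<exists>(x, t)\<in>K1 f m c E I. t < M)
       \<and> (\<forall>M::real. \<exists>x\<in>feasK c E I. (MAX i\<in>{..<m}. peval (f i) x) < M)
       \<and> \<not> (\<exists>xs. weakly_pareto f m (feasK c E I) xs)"
proof -
  have "snd v < 0"
    using \<open>lam > 0\<close> \<open>lam * snd v = -1\<close> by (smt (verit) mult_nonneg_nonneg)
  have K1_unbounded: "\<forall>M. \<exists>(x, t)\<in>K1 f m c E I. t < M"
    using K1_unbounded_below[OF assms(8) \<open>snd v < 0\<close>] by blast
  have max_unbounded: "\<forall>M. \<exists>x\<in>feasK c E I. (MAX i\<in>{..<m}. peval (f i) x) < M"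
    using max_objective_unbounded_below[OF assms(1,4) K1_unbounded] by blast
  show ?thesis
    using K1_unbounded max_unbounded not_weakly_pareto_if_max_unbounded[OF assms(1) max_unbounded]
    by blast
qed

end
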